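(* Let $(X,d)$ be a sequentially right $K$-complete quasi-pseudometric space and $\varphi:X\to\mathbb{R}\cup\{\infty\}$ a proper, bounded below, nearly lower semicontinuous function. For $x\in X$ let $S(x)=\{y\in X:\varphi(y)+d(y,x)\le\varphi(x)\}$. 1. If $T:X\to X$ satisfies $d(Tx,x)+\varphi(Tx)\le\varphi(x)$ for all $x\in X$, then there exists $z\in X$ with $\varphi(Tz)=\varphi(z)$. 2. If $T:X\rightrightarrows X$ is a set-valued mapping with $S(x)\cap Tx\neq\emptyset$ for every $x\in X$, then there exists $z\in X$ with $\varphi(z)\in\varphi(Tz)$.
   Context: A quasi-pseudometric on $X$ is $d:X\times X\to[0,\infty)$ with $d(x,x)=0$ and $d(x,z)\le d(x,y)+d(y,z)$ (no symmetry). Topology $\tau_d$: neighbourhood base at $x$ given by $\{y:d(x,y)<r\}$, $r>0$; $x_n\to x$ iff $d(x,x_n)\to0$. A sequence $(x_n)$ is right $K$-Cauchy if for every $\varepsilon>0$ there is $n_\varepsilon$ with $d(x_{n+k},x_n)<\varepsilon$ for all $n\ge n_\varepsilon$, $k\in\mathbb{N}$; $X$ is sequentially right $K$-complete if every right $K$-Cauchy sequence converges. $\varphi$ is proper if finite somewhere; nearly lower semicontinuous if $\varphi(x)\le\liminf_n\varphi(x_n)$ for every sequence with pairwise distinct terms converging to $x$. *)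

theory Defs
  imports "HOL-Analysis.Analysis"
begin

definition quasi_pseudometric :: "('a \<Rightarrow> 'a \<Rightarrow> real) \<Rightarrow> bool" where
  "quasi_pseudometric d \<longleftrightarrow>
     (\<forall>x y. 0 \<le> d x y) \<and> (\<forall>x. d x x = 0) \<and> (\<forall>x y z. d x z \<le> d x y + d y z)"

definition qconv :: "('a \<Rightarrow> 'a \<Rightarrow> real) \<Rightarrow> (nat \<Rightarrow> 'a) \<Rightarrow> 'a \<Rightarrow> bool" where
  "qconv d xs x \<longleftrightarrow> (\<lambda>n. d x (xs n)) \<longlonglongrightarrow> 0"

definition right_K_Cauchy :: "('a \<Rightarrow> 'a \<Rightarrow> real) \<Rightarrow> (nat \<Rightarrow> 'a) \<Rightarrow> bool" where
  "right_K_Cauchy d xs \<longleftrightarrow>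
     (\<forall>\<epsilon>>0. \<exists>N. \<forall>n\<ge>N. \<forall>k. d (xs (n + k)) (xs n) < \<epsilon>)"

definition seq_right_K_complete :: "('a \<Rightarrow> 'a \<Rightarrow> real) \<Rightarrow> bool" where
  "seq_right_K_complete d \<longleftrightarrow> (\<forall>xs. right_K_Cauchy d xs \<longrightarrow> (\<exists>x. qconv d xs x))"

text \<open>Functions X -> R \<union> {\<infinity>} are modelled as ereal-valued functions never equal to -\<infinity>.\<close>
definition proper_fun :: "('a \<Rightarrow> ereal) \<Rightarrow> bool" where
  "proper_fun \<phi> \<longleftrightarrow> (\<exists>x. \<phi> x \<noteq> \<infinity>)"

definition bounded_below_fun :: "('a \<Rightarrow> ereal) \<Rightarrow> bool" where
  "bounded_below_fun \<phi> \<longleftrightarrow> (\<exists>c::real. \<forall>x. ereal c \<le> \<phi> x)"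

definition nearly_lsc :: "('a \<Rightarrow> 'a \<Rightarrow> real) \<Rightarrow> ('a \<Rightarrow> ereal) \<Rightarrow> bool" where
  "nearly_lsc d \<phi> \<longleftrightarrow>
     (\<forall>xs x. inj xs \<and> qconv d xs x \<longrightarrow> \<phi> x \<le> liminf (\<lambda>n. \<phi> (xs n)))"

definition S_set :: "('a \<Rightarrow> 'a \<Rightarrow> real) \<Rightarrow> ('a \<Rightarrow> ereal) \<Rightarrow> 'a \<Rightarrow> 'a set" where
  "S_set d \<phi> x = {y. \<phi> y + ereal (d y x) \<le> \<phi> x}"

end

theory Submission
  imports Defs
begin

text \<open>
  On the part D of X where \<phi> is finite, \<phi> is a real function f. If no point z of D had
  f constant on S(z), one could pick x_{n+1} \<in> S(x_n) with f(x_{n+1}) strictly below f(x_n)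
  and within 1/(n+1) of inf f(S(x_n)). Since the sets S(x_n) are nested and f is bounded
  below, this sequence is right K-Cauchy; its limit x lies in every S(x_n) and has
  f(x) \<le> lim f(x_n). A point y \<in> S(x) with f(y) < f(x) would then lie in every S(x_n),
  forcing lim f(x_n) \<le> f(y) < f(x), a contradiction. Any such z satisfies both
  conclusions, since Tz \<in> S(z) in the first case and S(z) \<inter> Tz \<noteq> {} in the second.
\<close>

lemma quasi_pseudometricD:
  assumes "quasi_pseudometric d"
  shows "0 \<le> d x y" and "d x x = 0" and "d x z \<le> d x y + d y z"
  using assms unfolding quasi_pseudometric_def by auto

definition ekeland_set :: "('a \<Rightarrow> 'a \<Rightarrow> real) \<Rightarrow> ('a \<Rightarrow> real) \<Rightarrow> 'a set \<Rightarrow> 'a \<Rightarrow> 'a set" where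
  "ekeland_set d f D x = {y \<in> D. f y + d y x \<le> f x}"

lemma ekeland_set_trans:
  assumes "quasi_pseudometric d" "y \<in> ekeland_set d f D x" "z \<in> ekeland_set d f D y"
  shows "z \<in> ekeland_set d f D x"
  using assms quasi_pseudometricD(3)[OF assms(1), of z x y] unfolding ekeland_set_def by force

lemma ekeland_set_refl:
  assumes "quasi_pseudometric d" "x \<in> D"
  shows "x \<in> ekeland_set d f D x"
  using assms quasi_pseudometricD(2)[OF assms(1)] unfolding ekeland_set_def by simp

lemma bdd_below_ekeland_set:
  assumes "\<forall>x\<in>D. c \<le> f x"
  shows "bdd_below (f ` ekeland_set d f D x)"
  using assms unfolding ekeland_set_def bdd_below_def by auto

lemma ekeland_chain:
  assumes "quasi_pseudometric d" "\<forall>n. xs n \<in> D"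
    and "\<forall>n. xs (Suc n) \<in> ekeland_set d f D (xs n)"
  shows "xs (n + k) \<in> ekeland_set d f D (xs n)"
proof (induction k)
  case 0
  show ?case using ekeland_set_refl[OF assms(1)] assms(2) by simp
next
  case (Suc k)
  have "xs (Suc (n + k)) \<in> ekeland_set d f D (xs (n + k))" using assms(3) by blast
  then show ?case using ekeland_set_trans[OF assms(1) Suc.IH] by simp
qed

lemma right_K_Cauchy_of_descent:
  assumes descent: "\<And>n k. f (xs (n + k)) + d (xs (n + k)) (xs n) \<le> f (xs n)"
    and lim: "(\<lambda>n. f (xs n)) \<longlonglongrightarrow> L" and above: "\<And>n. L \<le> f (xs n)"
  shows "right_K_Cauchy d xs"
  unfolding right_K_Cauchy_def
proof (intro allI impI)
  fix e :: real assume "e > 0"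
  then obtain N where N: "\<forall>n\<ge>N. \<bar>f (xs n) - L\<bar> < e"
    using LIMSEQ_D[OF lim] by (auto simp: dist_real_def)
  have "d (xs (n + k)) (xs n) < e" if "N \<le> n" for n k
    using N that descent[of n k] above[of "n + k"] by force
  then show "\<exists>N. \<forall>n\<ge>N. \<forall>k. d (xs (n + k)) (xs n) < e" by blast
qed

lemma limit_of_descent_in_ekeland_set:
  assumes qpm: "quasi_pseudometric d"
    and descent: "\<And>n k. f (xs (n + k)) + d (xs (n + k)) (xs n) \<le> f (xs n)"
    and above: "\<And>n. L \<le> f (xs n)"
    and conv: "qconv d xs x" and "x \<in> D" and "f x \<le> L"
  shows "x \<in> ekeland_set d f D (xs n)"
proof -
  have "d x (xs n) \<le> d x (xs (n + k)) + (f (xs n) - L)" for k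
    using quasi_pseudometricD(3)[OF qpm, of x "xs n" "xs (n + k)"] descent[of n k] above[of "n + k"]
    by linarith
  moreover have "(\<lambda>k. d x (xs (n + k))) \<longlonglongrightarrow> 0"
    using LIMSEQ_ignore_initial_segment[OF conv[unfolded qconv_def], of n]
    by (simp add: add.commute)
  then have "(\<lambda>k. d x (xs (n + k)) + (f (xs n) - L)) \<longlonglongrightarrow> f (xs n) - L"
    using tendsto_add[OF _ tendsto_const] by fastforce
  ultimately have "d x (xs n) \<le> f (xs n) - L"
    by (intro LIMSEQ_le_const) auto
  then show ?thesis using assms(5,6) unfolding ekeland_set_def by auto
qed

lemma ekeland_sequence:
  assumes "x0 \<in> D" and "\<forall>x\<in>D. c \<le> f x"
    and strict: "\<And>x. x \<in> D \<Longrightarrow> \<exists>y\<in>ekeland_set d f D x. f y < f x"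
  shows "\<exists>xs. \<forall>n. xs n \<in> D \<and> xs (Suc n) \<in> ekeland_set d f D (xs n)
            \<and> f (xs (Suc n)) < f (xs n)
            \<and> f (xs (Suc n)) < Inf (f ` ekeland_set d f D (xs n)) + inverse (real (Suc n))"
proof (rule dependent_nat_choice)
  show "\<exists>x. x \<in> D" using assms(1) by blast
next
  fix x n assume "x \<in> D"
  let ?E = "ekeland_set d f D x"
  obtain y0 where y0: "y0 \<in> ?E" "f y0 < f x" using strict[OF \<open>x \<in> D\<close>] by blast
  have "Inf (f ` ?E) \<le> f y0"
    using cInf_lower[OF imageI[OF y0(1)] bdd_below_ekeland_set[OF assms(2)]] .
  then have "Inf (f ` ?E) < min (f x) (Inf (f ` ?E) + inverse (real (Suc n)))"
    using y0(2) by simp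
  then obtain y where "y \<in> ?E" "f y < min (f x) (Inf (f ` ?E) + inverse (real (Suc n)))"
    using cInf_less_iff[OF _ bdd_below_ekeland_set[OF assms(2)]] y0(1) by blast
  moreover have "y \<in> D" using \<open>y \<in> ?E\<close> unfolding ekeland_set_def by simp
  ultimately show "\<exists>y. y \<in> D \<and> y \<in> ?E \<and> f y < f x \<and> f y < Inf (f ` ?E) + inverse (real (Suc n))"
    by auto
qed

text \<open>A weak Ekeland principle. Lower semicontinuity is only used along a sequence on which
  f strictly decreases, hence an injective one: this is why nearly lsc functions suffice.\<close>
lemma weak_ekeland_principle:
  fixes d :: "'a \<Rightarrow> 'a \<Rightarrow> real" and f :: "'a \<Rightarrow> real"
  assumes qpm: "quasi_pseudometric d" and cpl: "seq_right_K_complete d"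
    and "x0 \<in> D" and bnd: "\<forall>x\<in>D. c \<le> f x"
    and lsc: "\<And>xs x L. inj xs \<Longrightarrow> \<forall>n. xs n \<in> D \<Longrightarrow> qconv d xs x \<Longrightarrow>
               (\<lambda>n. f (xs n)) \<longlonglongrightarrow> L \<Longrightarrow> x \<in> D \<and> f x \<le> L"
  shows "\<exists>z\<in>D. \<forall>y\<in>ekeland_set d f D z. f y = f z"
proof (rule ccontr)
  let ?E = "ekeland_set d f D"
  assume no_const: "\<not> ?thesis"
  have strict: "\<exists>y\<in>?E x. f y < f x" if x: "x \<in> D" for x
  proof -
    obtain y where y: "y \<in> ?E x" "f y \<noteq> f x" using no_const x by blast
    then have "f y \<le> f x"
      using quasi_pseudometricD(1)[OF qpm, of y x] unfolding ekeland_set_def by simp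
    with y show ?thesis by (intro bexI[of _ y]) auto
  qed
  obtain xs where xsD: "\<forall>n. xs n \<in> D" and step: "\<forall>n. xs (Suc n) \<in> ?E (xs n)"
    and dec: "\<And>n. f (xs (Suc n)) < f (xs n)"
    and near_inf: "\<And>n. f (xs (Suc n)) < Inf (f ` ?E (xs n)) + inverse (real (Suc n))"
    using ekeland_sequence[OF \<open>x0 \<in> D\<close> bnd strict] by blast
  have descent: "f (xs (n + k)) + d (xs (n + k)) (xs n) \<le> f (xs n)" for n k
    using ekeland_chain[OF qpm xsD step] unfolding ekeland_set_def by blast
  have "strict_mono (\<lambda>n. - f (xs n))" using dec by (intro strict_monoI_Suc) simp
  then have "inj xs" by (intro injI) (metis strict_mono_eq neg_equal_iff_equal)
  have "decseq (\<lambda>n. f (xs n))" using dec by (intro decseq_SucI less_imp_le)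
  then obtain L where lim: "(\<lambda>n. f (xs n)) \<longlonglongrightarrow> L" and above: "\<And>n. L \<le> f (xs n)"
    using decseq_convergent[of "\<lambda>n. f (xs n)" c] bnd xsD by blast
  obtain x where conv: "qconv d xs x"
    using cpl right_K_Cauchy_of_descent[where f = f and d = d, OF descent lim above]
    unfolding seq_right_K_complete_def by blast
  have "x \<in> D" "f x \<le> L" using lsc[OF \<open>inj xs\<close> xsD conv lim] by auto
  then have x_in: "x \<in> ?E (xs n)" for n
    using limit_of_descent_in_ekeland_set[where f = f, OF qpm descent above conv] by blast
  obtain y where y: "y \<in> ?E x" "f y < f x" using strict[OF \<open>x \<in> D\<close>] by blast
  have "f (xs (Suc n)) \<le> f y + inverse (real (Suc n))" for n
    using near_inf[of n] cInf_lower[OF imageI[OF ekeland_set_trans[OF qpm x_in[of n] y(1)]]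
        bdd_below_ekeland_set[OF bnd]] by linarith
  then have "L \<le> f y"
    by (intro LIMSEQ_le[OF LIMSEQ_Suc[OF lim] LIMSEQ_inverse_real_of_nat_add]) simp
  then show False using y(2) \<open>f x \<le> L\<close> by linarith
qed

lemma S_set_constant_point:
  fixes d :: "'a \<Rightarrow> 'a \<Rightarrow> real" and \<phi> :: "'a \<Rightarrow> ereal"
  assumes qpm: "quasi_pseudometric d" and cpl: "seq_right_K_complete d"
    and not_minf: "\<forall>x. \<phi> x \<noteq> -\<infinity>" and "proper_fun \<phi>" and "bounded_below_fun \<phi>"
    and nlsc: "nearly_lsc d \<phi>"
  shows "\<exists>z. \<forall>y\<in>S_set d \<phi> z. \<phi> y = \<phi> z"
proof -
  define f where "f x = real_of_ereal (\<phi> x)" for x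
  define D where "D = {x. \<phi> x \<noteq> \<infinity>}"
  have \<phi>_D: "\<phi> x = ereal (f x)" if "x \<in> D" for x
    using that not_minf unfolding D_def f_def by (cases "\<phi> x") auto
  obtain x0 where "x0 \<in> D" using \<open>proper_fun \<phi>\<close> unfolding proper_fun_def D_def by auto
  obtain c :: real where "\<forall>x. ereal c \<le> \<phi> x"
    using \<open>bounded_below_fun \<phi>\<close> unfolding bounded_below_fun_def by auto
  then have bnd: "\<forall>x\<in>D. c \<le> f x" using \<phi>_D by (metis ereal_less_eq(3))
  have lsc: "x \<in> D \<and> f x \<le> L" if "inj xs" "\<forall>n. xs n \<in> D" "qconv d xs x"
     "(\<lambda>n. f (xs n)) \<longlonglongrightarrow> L" for xs x L
  proof -
    have "\<phi> x \<le> liminf (\<lambda>n. \<phi> (xs n))" using nlsc that unfolding nearly_lsc_def by blast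
    also have "(\<lambda>n. \<phi> (xs n)) = (\<lambda>n. ereal (f (xs n)))" using \<phi>_D that(2) by auto
    also have "liminf (\<lambda>n. ereal (f (xs n))) = ereal L"
      using tendsto_ereal[OF that(4)] by (intro lim_imp_Liminf) simp_all
    finally have "\<phi> x \<le> ereal L" .
    moreover from this have "x \<in> D" unfolding D_def by auto
    ultimately show ?thesis using \<phi>_D by auto
  qed
  obtain z where "z \<in> D" and z: "\<forall>y\<in>ekeland_set d f D z. f y = f z"
    using weak_ekeland_principle[where f = f and D = D, OF qpm cpl \<open>x0 \<in> D\<close> bnd lsc] ..
  have "\<phi> y = \<phi> z" if "y \<in> S_set d \<phi> z" for y
  proof -
    have le: "\<phi> y + ereal (d y z) \<le> ereal (f z)"
      using that \<phi>_D[OF \<open>z \<in> D\<close>] unfolding S_set_def by auto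
    then have "y \<in> D" unfolding D_def by auto
    with le have "y \<in> ekeland_set d f D z" unfolding ekeland_set_def by (simp add: \<phi>_D)
    with z have "f y = f z" by blast
    then show ?thesis using \<phi>_D \<open>y \<in> D\<close> \<open>z \<in> D\<close> by simp
  qed
  then show ?thesis by blast
qed

theorem theorem3p7:
  fixes d :: "'a \<Rightarrow> 'a \<Rightarrow> real" and \<phi> :: "'a \<Rightarrow> ereal"
  assumes "quasi_pseudometric d"
    and "seq_right_K_complete d"
    and "\<forall>x. \<phi> x \<noteq> -\<infinity>"
    and "proper_fun \<phi>"
    and "bounded_below_fun \<phi>"
    and "nearly_lsc d \<phi>"
  shows "(\<forall>T :: 'a \<Rightarrow> 'a. (\<forall>x. ereal (d (T x) x) + \<phi> (T x) \<le> \<phi> x) \<longrightarrow>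
            (\<exists>z. \<phi> (T z) = \<phi> z))
       \<and> (\<forall>T :: 'a \<Rightarrow> 'a set. (\<forall>x. S_set d \<phi> x \<inter> T x \<noteq> {}) \<longrightarrow>
            (\<exists>z. \<phi> z \<in> \<phi> ` T z))"
proof -
  obtain z where z: "\<forall>y\<in>S_set d \<phi> z. \<phi> y = \<phi> z"
    using S_set_constant_point[OF assms] by blast
  have "\<phi> (T z) = \<phi> z" if "\<forall>x. ereal (d (T x) x) + \<phi> (T x) \<le> \<phi> x" for T :: "'a \<Rightarrow> 'a"
    using z that unfolding S_set_def by (simp add: add.commute)
  moreover have "\<phi> z \<in> \<phi> ` T z" if "\<forall>x. S_set d \<phi> x \<inter> T x \<noteq> {}" for T :: "'a \<Rightarrow> 'a set"
    using z that by (metis disjoint_iff image_eqI)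
  ultimately show ?thesis by blast
qed

end
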